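(* Let $G$ be a finite abelian group. There is a point $\nu\in\mathcal{P}(G)$ whose basin of attraction (the set of $\mu\in\mathcal{P}(G)$ whose $\omega$-limit set under $Q$ is $\{\nu\}$) is an open and dense subset of $\mathcal{P}(G)$.
   Context: $\mathcal{P}(G)$ is the simplex of probability measures on $G$ with convolution $(\nu*\mu)(\{g\})=\sum_{xy=g}\nu(\{x\})\mu(\{y\})$ and unit $1=\delta_e$. For $t\in[0,1)$, $Q_t(\mu)=(1-t)\mu*(1-t\mu)^{-1}=\sum_{k\ge0}(1-t)t^k\mu^{k+1}$. The $\omega$-limit set of $\mu$ is $\{\nu:\nu=\lim_kQ_{t_k}(\mu)\text{ for some } t_k\to1^-\}$. Such a $\nu$ is called the main attractor point. *)

theory Defs
  imports "HOL-Analysis.Analysis"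
begin

text \<open>A finite abelian group is modelled as a type of class
  {ab_group_add, finite}, written additively (unit 0).  Measures on G are
  vectors in real^'g (Euclidean topology).\<close>

definition prob_meas :: "(real ^ ('g::{ab_group_add,finite})) set" where
  "prob_meas = {\<mu>. (\<forall>g. 0 \<le> \<mu> $ g) \<and> (\<Sum>g\<in>UNIV. \<mu> $ g) = 1}"

definition conv :: "real ^ ('g::{ab_group_add,finite}) \<Rightarrow> real ^ ('g::{ab_group_add,finite}) \<Rightarrow> real ^ ('g::{ab_group_add,finite})" where
  "conv \<nu> \<mu> = (\<chi> g. \<Sum>x\<in>UNIV. \<nu> $ x * \<mu> $ (g - x))"

definition delta0 :: "real ^ ('g::{ab_group_add,finite})" where
  "delta0 = (\<chi> g. if g = 0 then 1 else 0)"

fun conv_pow :: "real ^ ('g::{ab_group_add,finite}) \<Rightarrow> nat \<Rightarrow> real ^ ('g::{ab_group_add,finite})" where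
  "conv_pow \<mu> 0 = delta0"
| "conv_pow \<mu> (Suc n) = conv \<mu> (conv_pow \<mu> n)"

definition Qmap :: "real \<Rightarrow> real ^ ('g::{ab_group_add,finite}) \<Rightarrow> real ^ ('g::{ab_group_add,finite})" where
  "Qmap t \<mu> = (\<Sum>k. ((1 - t) * t ^ k) *\<^sub>R conv_pow \<mu> (Suc k))"

definition omega_limit :: "real ^ ('g::{ab_group_add,finite}) \<Rightarrow> (real ^ ('g::{ab_group_add,finite})) set" where
  "omega_limit \<mu> = {\<nu>. \<exists>t :: nat \<Rightarrow> real. (\<forall>k. 0 \<le> t k \<and> t k < 1) \<and> t \<longlonglongrightarrow> 1
      \<and> (\<lambda>k. Qmap (t k) \<mu>) \<longlonglongrightarrow> \<nu>}"

definition basin :: "real ^ ('g::{ab_group_add,finite}) \<Rightarrow> (real ^ ('g::{ab_group_add,finite})) set" where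
  "basin \<nu> = {\<mu> \<in> prob_meas. omega_limit \<mu> = {\<nu>}}"

end

(*
  The resolvent identity t \<mu> * Q\<^sub>t(\<mu>) = Q\<^sub>t(\<mu>) - (1 - t) \<mu> shows that every limit
  point \<nu> of Q\<^sub>t(\<mu>) as t \<rightarrow> 1 is \<mu>-harmonic: \<mu> * \<nu> = \<nu>.  If the support of \<mu>
  generates G, a maximum principle forces such a \<nu> to be constant, i.e. the uniform
  distribution u; by compactness of P(G) the whole family Q\<^sub>t(\<mu>) then converges to u.
  If the support does not generate G, all convolution powers of \<mu>, hence all Q\<^sub>t(\<mu>),
  vanish outside a translate of a proper subset of G, so u is not an \<omega>-limit point.
  Hence the basin of u consists exactly of the generating measures: this is an open
  condition on the support, and it is dense because mixing with u makes every
  coordinate positive.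
*)
theory Submission
  imports Defs
begin

lemma sum_UNIV_translate:
  "(\<Sum>g\<in>UNIV. f (g - x)) = (\<Sum>g\<in>(UNIV::'g::{ab_group_add,finite} set). f g)"
  by (rule sum.reindex_bij_witness[where i="\<lambda>g. g + x" and j="\<lambda>g. g - x"]) auto

lemma conv_nth: "conv \<nu> \<mu> $ g = (\<Sum>x\<in>UNIV. \<nu> $ x * \<mu> $ (g - x))"
  by (simp add: conv_def)

lemma conv_delta0: "conv \<mu> delta0 = \<mu>"
  by (simp add: vec_eq_iff conv_nth delta0_def if_distrib cong: if_cong)

lemma bounded_linear_conv: "bounded_linear (conv \<nu>)"
  unfolding linear_conv_bounded_linear[symmetric]
  by (rule linearI) (simp_all add: vec_eq_iff conv_nth algebra_simps sum.distrib sum_distrib_left)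

lemma delta0_prob_meas: "delta0 \<in> prob_meas"
  by (simp add: prob_meas_def delta0_def)

lemma conv_prob_meas:
  assumes "\<nu> \<in> prob_meas" "\<mu> \<in> prob_meas"
  shows "conv \<nu> \<mu> \<in> prob_meas"
proof -
  have "(\<Sum>g\<in>UNIV. conv \<nu> \<mu> $ g) = (\<Sum>x\<in>UNIV. \<nu> $ x * (\<Sum>g\<in>UNIV. \<mu> $ (g - x)))"
    unfolding conv_nth sum_distrib_left by (rule sum.swap)
  also have "\<dots> = 1"
    using assms by (simp add: sum_UNIV_translate[of "\<lambda>g. \<mu> $ g"] prob_meas_def)
  finally show ?thesis
    using assms by (auto simp: prob_meas_def conv_nth intro!: sum_nonneg)
qed

lemma conv_pow_prob_meas: "\<mu> \<in> prob_meas \<Longrightarrow> conv_pow \<mu> n \<in> prob_meas"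
  by (induction n) (auto simp: delta0_prob_meas conv_prob_meas)

lemma norm_prob_meas_le_1: "\<mu> \<in> prob_meas \<Longrightarrow> norm \<mu> \<le> 1"
  using norm_le_l1_cart[of \<mu>] by (auto simp: prob_meas_def)

lemma compact_prob_meas: "compact (prob_meas :: (real ^ 'g::{ab_group_add,finite}) set)"
proof (rule compact_eq_bounded_closed[THEN iffD2, OF conjI])
  show "bounded (prob_meas :: (real ^ 'g::{ab_group_add,finite}) set)"
    unfolding bounded_iff using norm_prob_meas_le_1 by blast
  show "closed (prob_meas :: (real ^ 'g::{ab_group_add,finite}) set)"
    unfolding prob_meas_def
    by (intro closed_Collect_conj closed_Collect_all closed_Collect_le closed_Collect_eq continuous_intros)
qed

lemma summable_Qmap_series:
  assumes "\<mu> \<in> prob_meas" "0 \<le> t" "t < 1"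
  shows "summable (\<lambda>k. ((1 - t) * t ^ k) *\<^sub>R conv_pow \<mu> (Suc k))"
proof (rule summable_comparison_test)
  show "\<exists>N. \<forall>n\<ge>N. norm (((1 - t) * t ^ n) *\<^sub>R conv_pow \<mu> (Suc n)) \<le> (1 - t) * t ^ n"
    using assms norm_prob_meas_le_1[OF conv_pow_prob_meas[OF assms(1)]]
    by (simp add: mult_left_le del: conv_pow.simps)
  show "summable (\<lambda>n. (1 - t) * t ^ n)"
    using assms by (intro summable_mult summable_geometric) auto
qed

lemma Qmap_nth:
  assumes "\<mu> \<in> prob_meas" "0 \<le> t" "t < 1"
  shows "Qmap t \<mu> $ g = (\<Sum>k. ((1 - t) * t ^ k) * conv_pow \<mu> (Suc k) $ g)"
    and "summable (\<lambda>k. ((1 - t) * t ^ k) * conv_pow \<mu> (Suc k) $ g)"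
  using bounded_linear.suminf[OF bounded_linear_vec_nth summable_Qmap_series[OF assms]]
    bounded_linear.summable[OF bounded_linear_vec_nth summable_Qmap_series[OF assms]]
  by (simp_all add: Qmap_def)

lemma Qmap_prob_meas:
  assumes "\<mu> \<in> prob_meas" "0 \<le> t" "t < 1"
  shows "Qmap t \<mu> \<in> prob_meas"
proof -
  have P: "conv_pow \<mu> n \<in> prob_meas" for n
    using conv_pow_prob_meas[OF assms(1)] .
  have nonneg: "0 \<le> Qmap t \<mu> $ g" for g
    unfolding Qmap_nth[OF assms] using assms P
    by (intro suminf_nonneg Qmap_nth[OF assms] mult_nonneg_nonneg)
      (auto simp: prob_meas_def simp del: conv_pow.simps)
  have "(\<Sum>g\<in>UNIV. Qmap t \<mu> $ g) = (\<Sum>k. \<Sum>g\<in>UNIV. ((1 - t) * t ^ k) * conv_pow \<mu> (Suc k) $ g)"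
    unfolding Qmap_nth[OF assms] by (rule suminf_sum[symmetric]) (rule Qmap_nth[OF assms])
  also have "\<dots> = (\<Sum>k. (1 - t) * t ^ k)"
    using P by (simp add: sum_distrib_left[symmetric] prob_meas_def del: conv_pow.simps)
  also have "\<dots> = 1"
    using assms by (simp add: suminf_mult summable_geometric suminf_geometric)
  finally show ?thesis
    using nonneg by (simp add: prob_meas_def)
qed

lemma Qmap_resolvent:
  assumes "\<mu> \<in> prob_meas" "0 \<le> t" "t < 1"
  shows "t *\<^sub>R conv \<mu> (Qmap t \<mu>) = Qmap t \<mu> - (1 - t) *\<^sub>R \<mu>"
proof -
  define c where "c k = (1 - t) * t ^ k" for k :: nat
  define a where "a k = conv_pow \<mu> (Suc k)" for k
  have S: "summable (\<lambda>k. c k *\<^sub>R a k)"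
    unfolding a_def c_def by (rule summable_Qmap_series[OF assms])
  have Q: "Qmap t \<mu> = (\<Sum>k. c k *\<^sub>R a k)"
    unfolding Qmap_def a_def c_def ..
  have conv_term: "conv \<mu> (c k *\<^sub>R a k) = c k *\<^sub>R a (Suc k)" for k
    using linear_scale[OF bounded_linear.linear[OF bounded_linear_conv]] by (simp add: a_def)
  have "conv \<mu> (Qmap t \<mu>) = (\<Sum>k. c k *\<^sub>R a (Suc k))"
    using bounded_linear.suminf[OF bounded_linear_conv[of \<mu>] S] by (simp add: Q conv_term)
  moreover have "summable (\<lambda>k. c k *\<^sub>R a (Suc k))"
    using bounded_linear.summable[OF bounded_linear_conv[of \<mu>] S] by (simp add: conv_term)
  ultimately have "t *\<^sub>R conv \<mu> (Qmap t \<mu>) = (\<Sum>k. c (Suc k) *\<^sub>R a (Suc k))"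
    by (simp add: suminf_scaleR_right c_def algebra_simps)
  also have "\<dots> = Qmap t \<mu> - (1 - t) *\<^sub>R \<mu>"
    using suminf_split_head[OF S] by (simp add: Q a_def c_def conv_delta0)
  finally show ?thesis .
qed

lemma Qmap_limit_conv_fixed:
  assumes \<mu>: "\<mu> \<in> prob_meas" and t: "\<forall>k. 0 \<le> t k \<and> t k < 1" "t \<longlonglongrightarrow> 1"
    and l: "(\<lambda>k. Qmap (t k) \<mu>) \<longlonglongrightarrow> l"
  shows "conv \<mu> l = l"
proof -
  have "(\<lambda>k. t k *\<^sub>R conv \<mu> (Qmap (t k) \<mu>)) = (\<lambda>k. Qmap (t k) \<mu> - (1 - t k) *\<^sub>R \<mu>)"
    using Qmap_resolvent[OF \<mu>] t(1) by (simp add: fun_eq_iff)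
  moreover have "(\<lambda>k. t k *\<^sub>R conv \<mu> (Qmap (t k) \<mu>)) \<longlonglongrightarrow> 1 *\<^sub>R conv \<mu> l"
    by (rule tendsto_scaleR[OF t(2) bounded_linear.tendsto[OF bounded_linear_conv l]])
  ultimately have "(\<lambda>k. Qmap (t k) \<mu> - (1 - t k) *\<^sub>R \<mu>) \<longlonglongrightarrow> 1 *\<^sub>R conv \<mu> l"
    by simp
  moreover have "(\<lambda>k. Qmap (t k) \<mu> - (1 - t k) *\<^sub>R \<mu>) \<longlonglongrightarrow> l - (1 - 1) *\<^sub>R \<mu>"
    by (rule tendsto_diff[OF l tendsto_scaleR[OF tendsto_diff[OF tendsto_const t(2)] tendsto_const]])
  ultimately have "1 *\<^sub>R conv \<mu> l = l - (1 - 1) *\<^sub>R \<mu>"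
    by (rule LIMSEQ_unique)
  then show ?thesis
    by simp
qed

lemma compact_LIMSEQ_unique_limit_point:
  fixes x :: "nat \<Rightarrow> 'a::metric_space"
  assumes "compact S" "\<And>n. x n \<in> S"
    and limit_point: "\<And>r l. strict_mono r \<Longrightarrow> (x \<circ> r) \<longlonglongrightarrow> l \<Longrightarrow> l = a"
  shows "x \<longlonglongrightarrow> a"
proof (rule ccontr)
  assume "\<not> x \<longlonglongrightarrow> a"
  then obtain e where e: "e > 0" "\<forall>N. \<exists>n\<ge>N. \<not> dist (x n) a < e"
    unfolding LIMSEQ_def by blast
  then have "infinite {n. e \<le> dist (x n) a}"
    unfolding infinite_nat_iff_unbounded_le by (auto simp: not_less)
  then obtain r :: "nat \<Rightarrow> nat" where r: "strict_mono r" "\<And>n. e \<le> dist (x (r n)) a"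
    using infinite_enumerate by blast
  obtain l and r' :: "nat \<Rightarrow> nat" where r': "strict_mono r'" "(x \<circ> r \<circ> r') \<longlonglongrightarrow> l"
    using seq_compactE[OF compact_imp_seq_compact[OF assms(1)], of "x \<circ> r"] assms(2)
    by (metis comp_apply)
  have "(x \<circ> (r \<circ> r')) \<longlonglongrightarrow> a"
    using limit_point[OF strict_mono_o[OF r(1) r'(1)]] r'(2) by (simp add: comp_assoc)
  then obtain n where "dist (x (r (r' n))) a < e"
    using e(1) unfolding LIMSEQ_def by fastforce
  then show False
    using r(2)[of "r' n"] by simp
qed

text \<open>The support of \<open>\<mu>\<close> generates \<open>G\<close> as a semigroup (equivalently as a group,
  \<open>G\<close> being finite).\<close>

definition generating :: "real ^ 'g::{ab_group_add,finite} \<Rightarrow> bool" where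
  "generating \<mu> \<longleftrightarrow> (\<forall>M. M \<noteq> {} \<and> (\<forall>g\<in>M. \<forall>s. 0 < \<mu> $ s \<longrightarrow> g + s \<in> M) \<longrightarrow> M = UNIV)"

definition uniform_meas :: "real ^ 'g::{ab_group_add,finite}" where
  "uniform_meas = (\<chi> g. 1 / real CARD('g))"

lemma uniform_meas_prob_meas: "uniform_meas \<in> prob_meas"
  by (simp add: uniform_meas_def prob_meas_def)

lemma uniform_meas_pos: "0 < uniform_meas $ g"
  by (simp add: uniform_meas_def)

lemma generating_mono: "generating \<mu> \<Longrightarrow> (\<And>s. 0 < \<mu> $ s \<Longrightarrow> 0 < \<nu> $ s) \<Longrightarrow> generating \<nu>"
  unfolding generating_def by blast

lemma generating_if_pos: "(\<And>s. 0 < \<mu> $ s) \<Longrightarrow> generating \<mu>"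
  unfolding generating_def by (metis add.commute diff_add_cancel equals0I UNIV_eq_I)

text \<open>Maximum principle: \<open>\<rho> g\<close> is a \<open>\<mu>\<close>-average of the values \<open>\<rho> (g - s)\<close>,
  so the maximum of \<open>\<rho>\<close> propagates backwards along the support of \<open>\<mu>\<close>.\<close>

lemma conv_fixpoint_const:
  assumes \<mu>: "\<mu> \<in> prob_meas" "generating \<mu>" and fixpoint: "conv \<mu> \<rho> = \<rho>"
  shows "\<rho> $ g = \<rho> $ h"
proof -
  define m where "m = Max (range (\<lambda>g. \<rho> $ g))"
  define M where "M = {g. \<rho> $ g = m}"
  have le: "\<rho> $ h \<le> m" for h
    unfolding m_def by (rule Max_ge) auto
  have "m \<in> range (\<lambda>g. \<rho> $ g)"
    unfolding m_def by (rule Max_in) auto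
  then have "M \<noteq> {}"
    by (auto simp: M_def)
  have max_backwards: "g - s \<in> M" if "g \<in> M" "0 < \<mu> $ s" for g s
  proof -
    have "(\<Sum>x\<in>UNIV. \<mu> $ x * (m - \<rho> $ (g - x))) = m * (\<Sum>x\<in>UNIV. \<mu> $ x) - conv \<mu> \<rho> $ g"
      by (simp add: algebra_simps sum_subtractf sum_distrib_left conv_nth)
    also have "\<dots> = 0"
      using \<mu>(1) fixpoint that(1) by (simp add: prob_meas_def M_def)
    finally have "\<mu> $ s * (m - \<rho> $ (g - s)) = 0"
      using \<mu>(1) le sum_nonneg_eq_0_iff[of UNIV "\<lambda>x. \<mu> $ x * (m - \<rho> $ (g - x))"]
      by (simp add: prob_meas_def)
    then show ?thesis
      using that(2) by (simp add: M_def)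
  qed
  have "uminus ` M = UNIV"
  proof (rule \<mu>(2)[unfolded generating_def, rule_format], intro conjI ballI allI impI)
    show "uminus ` M \<noteq> {}"
      using \<open>M \<noteq> {}\<close> by simp
    fix h s assume "h \<in> uminus ` M" "0 < \<mu> $ s"
    then show "h + s \<in> uminus ` M"
      using max_backwards by (auto intro!: image_eqI[where x="- h - s"])
  qed
  then have "x \<in> M" for x
    by (metis UNIV_I image_iff minus_minus)
  then show ?thesis
    by (simp add: M_def)
qed

lemma conv_fixpoint_eq_uniform_meas:
  fixes \<rho> :: "real ^ 'g::{ab_group_add,finite}"
  assumes "\<mu> \<in> prob_meas" "generating \<mu>" "\<rho> \<in> prob_meas" "conv \<mu> \<rho> = \<rho>"
  shows "\<rho> = uniform_meas"
proof -
  have "1 = (\<Sum>g\<in>UNIV. \<rho> $ g)"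
    using assms(3) by (simp add: prob_meas_def)
  also have "\<dots> = (\<Sum>g\<in>(UNIV :: 'g set). \<rho> $ 0)"
    using conv_fixpoint_const[OF assms(1,2,4)] by (intro sum.cong) auto
  also have "\<dots> = real CARD('g) * \<rho> $ 0"
    by simp
  finally have "\<rho> $ 0 = 1 / real CARD('g)"
    by (simp add: field_simps)
  then show ?thesis
    using conv_fixpoint_const[OF assms(1,2,4), of _ 0] by (simp add: vec_eq_iff uniform_meas_def)
qed

lemma Qmap_tendsto_uniform_meas:
  assumes \<mu>: "\<mu> \<in> prob_meas" "generating \<mu>"
    and t: "\<forall>k. 0 \<le> t k \<and> t k < 1" "t \<longlonglongrightarrow> 1"
  shows "(\<lambda>k. Qmap (t k) \<mu>) \<longlonglongrightarrow> uniform_meas"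
proof (rule compact_LIMSEQ_unique_limit_point[OF compact_prob_meas])
  show Q: "Qmap (t k) \<mu> \<in> prob_meas" for k
    using Qmap_prob_meas[OF \<mu>(1)] t(1) by simp
  fix r :: "nat \<Rightarrow> nat" and l
  assume r: "strict_mono r" and lim: "((\<lambda>k. Qmap (t k) \<mu>) \<circ> r) \<longlonglongrightarrow> l"
  have "l \<in> prob_meas"
    using closed_sequentially[OF compact_imp_closed[OF compact_prob_meas] _ lim] Q by simp
  moreover have "conv \<mu> l = l"
  proof (rule Qmap_limit_conv_fixed[OF \<mu>(1)])
    show "\<forall>k. 0 \<le> (t \<circ> r) k \<and> (t \<circ> r) k < 1" "(t \<circ> r) \<longlonglongrightarrow> 1"
      using t LIMSEQ_subseq_LIMSEQ[OF t(2) r] by simp_all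
    show "(\<lambda>k. Qmap ((t \<circ> r) k) \<mu>) \<longlonglongrightarrow> l"
      using lim by (simp add: comp_def)
  qed
  ultimately show "l = uniform_meas"
    using conv_fixpoint_eq_uniform_meas[OF \<mu>] by blast
qed

lemma omega_limit_generating:
  assumes "\<mu> \<in> prob_meas" "generating \<mu>"
  shows "omega_limit \<mu> = {uniform_meas}"
proof -
  define t where "t k = 1 - inverse (real (Suc k))" for k :: nat
  have "\<forall>k. 0 \<le> t k \<and> t k < 1"
    by (simp add: t_def inverse_le_1_iff)
  moreover have "t \<longlonglongrightarrow> 1"
    unfolding t_def using LIMSEQ_inverse_real_of_nat_add_minus[of 1] by simp
  ultimately have "uniform_meas \<in> omega_limit \<mu>"
    unfolding omega_limit_def using Qmap_tendsto_uniform_meas[OF assms] by blast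
  moreover have "\<nu> = uniform_meas" if "\<nu> \<in> omega_limit \<mu>" for \<nu>
    using that Qmap_tendsto_uniform_meas[OF assms] LIMSEQ_unique
    unfolding omega_limit_def by blast
  ultimately show ?thesis
    by blast
qed

lemma conv_pow_support:
  assumes \<mu>: "\<mu> \<in> prob_meas" and M: "g\<^sub>0 \<in> M" "\<forall>g\<in>M. \<forall>s. 0 < \<mu> $ s \<longrightarrow> g + s \<in> M"
  shows "conv_pow \<mu> n $ g \<noteq> 0 \<Longrightarrow> g\<^sub>0 + g \<in> M"
proof (induction n arbitrary: g)
  case 0
  then show ?case
    using M(1) by (simp add: delta0_def split: if_splits)
next
  case (Suc n)
  then obtain x where x: "\<mu> $ x * conv_pow \<mu> n $ (g - x) \<noteq> 0"
    by (auto simp: conv_nth elim: sum.not_neutral_contains_not_neutral)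
  then have "0 < \<mu> $ x"
    using \<mu> by (auto simp: prob_meas_def order.order_iff_strict)
  moreover have "g\<^sub>0 + (g - x) \<in> M"
    using Suc.IH x by simp
  ultimately have "g\<^sub>0 + (g - x) + x \<in> M"
    using M(2) by blast
  then show ?case
    by (simp add: algebra_simps)
qed

lemma uniform_meas_notin_omega_limit:
  assumes \<mu>: "\<mu> \<in> prob_meas" and "\<not> generating \<mu>"
  shows "uniform_meas \<notin> omega_limit \<mu>"
proof
  obtain M g\<^sub>0 h\<^sub>0 where M: "g\<^sub>0 \<in> M" "h\<^sub>0 \<notin> M" "\<forall>g\<in>M. \<forall>s. 0 < \<mu> $ s \<longrightarrow> g + s \<in> M"
    using assms(2) unfolding generating_def by blast
  have "conv_pow \<mu> n $ (h\<^sub>0 - g\<^sub>0) = 0" for n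
    using conv_pow_support[OF \<mu> M(1,3), of n "h\<^sub>0 - g\<^sub>0"] M(2) by auto
  then have Q0: "Qmap t \<mu> $ (h\<^sub>0 - g\<^sub>0) = 0" if "0 \<le> t" "t < 1" for t
    using Qmap_nth(1)[OF \<mu> that] by (simp del: conv_pow.simps)
  assume "uniform_meas \<in> omega_limit \<mu>"
  then obtain t where t: "\<forall>k. 0 \<le> t k \<and> t k < 1" "(\<lambda>k. Qmap (t k) \<mu>) \<longlonglongrightarrow> uniform_meas"
    unfolding omega_limit_def by blast
  have "(\<lambda>k. Qmap (t k) \<mu> $ (h\<^sub>0 - g\<^sub>0)) \<longlonglongrightarrow> uniform_meas $ (h\<^sub>0 - g\<^sub>0)"
    using t(2) by (rule tendsto_vec_nth)
  then have "uniform_meas $ (h\<^sub>0 - g\<^sub>0) = 0"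
    using Q0 t(1) by (simp add: LIMSEQ_const_iff)
  then show False
    using uniform_meas_pos by (metis less_irrefl)
qed

lemma basin_uniform_meas_iff: "\<mu> \<in> basin uniform_meas \<longleftrightarrow> \<mu> \<in> prob_meas \<and> generating \<mu>"
  using omega_limit_generating uniform_meas_notin_omega_limit unfolding basin_def by blast

lemma openin_basin_uniform_meas:
  "openin (top_of_set prob_meas) (basin (uniform_meas :: real ^ 'g::{ab_group_add,finite}))"
proof (subst openin_subopen, intro ballI)
  fix \<mu> :: "real ^ 'g::{ab_group_add,finite}" assume \<mu>: "\<mu> \<in> basin uniform_meas"
  define V where "V = (\<Inter>s\<in>{s. 0 < \<mu> $ s}. {\<nu> :: real ^ 'g::{ab_group_add,finite}. 0 < \<nu> $ s})"
  have "open V"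
    unfolding V_def by (intro open_INT) (simp_all add: open_halfspace_component_gt_cart)
  moreover have "\<mu> \<in> V"
    by (simp add: V_def)
  moreover have "prob_meas \<inter> V \<subseteq> basin uniform_meas"
  proof
    fix \<nu> assume "\<nu> \<in> prob_meas \<inter> V"
    moreover have "generating \<mu>"
      using \<mu> by (simp add: basin_uniform_meas_iff)
    ultimately show "\<nu> \<in> basin uniform_meas"
      using generating_mono[of \<mu> \<nu>] by (auto simp: basin_uniform_meas_iff V_def)
  qed
  moreover have "\<mu> \<in> prob_meas"
    using \<mu> by (simp add: basin_def)
  ultimately show "\<exists>T. openin (top_of_set prob_meas) T \<and> \<mu> \<in> T \<and> T \<subseteq> basin uniform_meas"
    by (intro exI[of _ "prob_meas \<inter> V"]) auto
qed

lemma mix_uniform_meas_in_basin: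
  fixes \<mu> :: "real ^ 'g::{ab_group_add,finite}"
  assumes \<mu>: "\<mu> \<in> prob_meas" and e: "0 < e" "e \<le> 1"
  shows "(1 - e) *\<^sub>R \<mu> + e *\<^sub>R uniform_meas \<in> basin uniform_meas"
proof -
  define \<nu> where "\<nu> = (1 - e) *\<^sub>R \<mu> + e *\<^sub>R uniform_meas"
  have pos: "0 < \<nu> $ g" for g
    using \<mu> e uniform_meas_pos[of g]
    by (simp add: \<nu>_def prob_meas_def add_nonneg_pos)
  have "(\<Sum>g\<in>UNIV. \<nu> $ g) =
      (1 - e) * (\<Sum>g\<in>UNIV. \<mu> $ g) + e * (\<Sum>g\<in>UNIV. (uniform_meas :: real ^ 'g::{ab_group_add,finite}) $ g)"
    by (simp add: \<nu>_def sum.distrib sum_distrib_left)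
  also have "\<dots> = 1"
    using \<mu> uniform_meas_prob_meas[where 'a='g] by (simp add: prob_meas_def)
  finally have "\<nu> \<in> prob_meas"
    using pos by (simp add: prob_meas_def less_imp_le)
  moreover have "generating \<nu>"
    using pos by (rule generating_if_pos)
  ultimately show ?thesis
    unfolding basin_uniform_meas_iff \<nu>_def by blast
qed

lemma prob_meas_subset_closure_basin_uniform_meas:
  "prob_meas \<subseteq> closure (basin (uniform_meas :: real ^ 'g::{ab_group_add,finite}))"
proof
  fix \<mu> :: "real ^ 'g::{ab_group_add,finite}" assume \<mu>: "\<mu> \<in> prob_meas"
  define f where
    "f n = (1 - inverse (real (Suc n))) *\<^sub>R \<mu> + inverse (real (Suc n)) *\<^sub>R uniform_meas" for n :: nat
  have "f n \<in> basin uniform_meas" for n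
    unfolding f_def by (rule mix_uniform_meas_in_basin[OF \<mu>]) (simp_all add: inverse_le_1_iff)
  moreover have "f \<longlonglongrightarrow> (1 - 0) *\<^sub>R \<mu> + 0 *\<^sub>R uniform_meas"
    unfolding f_def by (intro tendsto_intros LIMSEQ_inverse_real_of_nat)
  ultimately show "\<mu> \<in> closure (basin uniform_meas)"
    unfolding closure_sequential by auto
qed

theorem mainTheorem19:
  shows "\<exists>\<nu> :: real ^ 'g::{ab_group_add,finite}. \<nu> \<in> prob_meas
     \<and> openin (top_of_set prob_meas) (basin \<nu>)
     \<and> prob_meas \<subseteq> closure (basin \<nu>)"
  using uniform_meas_prob_meas openin_basin_uniform_meas prob_meas_subset_closure_basin_uniform_meas
  by blast

end
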